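(* Let $G=(V,E)$ be an almost tree (2). If $X,Y\subseteq V$ are such that $\mathbf v(X)$ and $\mathbf v(Y)$ are distinct and adjacent vertices of $\mathrm{CUT}(G)$, then $|\delta(X\triangle Y)|\le 3$.
   Context: For an undirected graph $G=(V,E)$ and $S\subseteq V$, $\delta(S)\subseteq E$ denotes the set of edges with exactly one endpoint in $S$, and $\mathbf v(S)\in\{0,1\}^{E}$ is its incidence vector ($v(S)_e=1$ iff $e\in\delta(S)$). The cut polytope is $\mathrm{CUT}(G)=\operatorname{conv}\{\mathbf v(S):S\subseteq V\}\subset\mathbb R^{E}$; adjacency of vertices means they are joined by a one-dimensional face. $X\triangle Y$ denotes symmetric difference. A connected graph is an almost tree ($k$) if every biconnected component (maximal subgraph that remains connected after removal of any single vertex) has at most $k$ edges not belonging to a spanning tree of that component. *)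

theory Defs
  imports "HOL-Analysis.Analysis"
begin

text \<open>A finite graph with vertex type 'v and edge type 'e (both finite);
  ends e is the two-element set of endpoints of edge e.  The whole graph has
  vertex set UNIV and edge set UNIV.\<close>

definition simple_graph :: "('e \<Rightarrow> 'v set) \<Rightarrow> bool" where
  "simple_graph ends \<longleftrightarrow> (\<forall>e. card (ends e) = 2) \<and> inj ends"

definition adj :: "('e \<Rightarrow> 'v set) \<Rightarrow> 'e set \<Rightarrow> 'v \<Rightarrow> 'v \<Rightarrow> bool" where
  "adj ends F u v \<longleftrightarrow> (\<exists>e\<in>F. ends e = {u, v})"

definition is_subgraph :: "('e \<Rightarrow> 'v set) \<Rightarrow> 'v set \<Rightarrow> 'e set \<Rightarrow> bool" where
  "is_subgraph ends W F \<longleftrightarrow> (\<forall>e\<in>F. ends e \<subseteq> W)"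

definition connected_sg :: "('e \<Rightarrow> 'v set) \<Rightarrow> 'v set \<Rightarrow> 'e set \<Rightarrow> bool" where
  "connected_sg ends W F \<longleftrightarrow> (\<forall>u\<in>W. \<forall>v\<in>W. (adj ends F)\<^sup>*\<^sup>* u v)"

definition biconn :: "('e \<Rightarrow> 'v set) \<Rightarrow> 'v set \<Rightarrow> 'e set \<Rightarrow> bool" where
  "biconn ends W F \<longleftrightarrow> connected_sg ends W F \<and>
     (\<forall>w\<in>W. connected_sg ends (W - {w}) {e\<in>F. w \<notin> ends e})"

definition biconnected_component :: "('e \<Rightarrow> 'v set) \<Rightarrow> 'v set \<Rightarrow> 'e set \<Rightarrow> bool" where
  "biconnected_component ends W F \<longleftrightarrow> is_subgraph ends W F \<and> biconn ends W F \<and>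
     (\<forall>W' F'. is_subgraph ends W' F' \<and> biconn ends W' F' \<and> W \<subseteq> W' \<and> F \<subseteq> F'
        \<longrightarrow> W' = W \<and> F' = F)"

definition spanning_tree :: "('e \<Rightarrow> 'v set) \<Rightarrow> 'v set \<Rightarrow> 'e set \<Rightarrow> 'e set \<Rightarrow> bool" where
  "spanning_tree ends W F T \<longleftrightarrow> T \<subseteq> F \<and> connected_sg ends W T \<and>
     (\<forall>t\<in>T. \<not> connected_sg ends W (T - {t}))"

definition almost_tree :: "nat \<Rightarrow> ('e \<Rightarrow> 'v set) \<Rightarrow> bool" where
  "almost_tree k ends \<longleftrightarrow> connected_sg ends UNIV UNIV \<and>
     (\<forall>W F. biconnected_component ends W F \<longrightarrow>
        (\<exists>T. spanning_tree ends W F T \<and> card (F - T) \<le> k))"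

definition delta :: "('e \<Rightarrow> 'v set) \<Rightarrow> 'v set \<Rightarrow> 'e set" where
  "delta ends S = {e. card (ends e \<inter> S) = 1}"

definition cutvec :: "('e::finite \<Rightarrow> 'v set) \<Rightarrow> 'v set \<Rightarrow> real ^ 'e" where
  "cutvec ends S = (\<chi> e. if e \<in> delta ends S then 1 else 0)"

definition CUT :: "('e::finite \<Rightarrow> 'v set) \<Rightarrow> (real ^ 'e) set" where
  "CUT ends = convex hull (range (cutvec ends))"

definition adjacent_in :: "(real ^ 'e::finite) set \<Rightarrow> real ^ 'e \<Rightarrow> real ^ 'e \<Rightarrow> bool" where
  "adjacent_in P x y \<longleftrightarrow> (\<exists>F. F face_of P \<and> aff_dim F = 1 \<and> x \<in> F \<and> y \<in> F)"

end

theory Submission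
  imports Defs
begin

text \<open>Let \<open>S = X \<triangle> Y\<close>. If \<open>\<delta>(S)\<close> contains a nonempty proper subcut \<open>\<delta>(A)\<close>, then the
  segment from \<open>v(X)\<close> to \<open>v(Y)\<close> has the same midpoint as the segment between the two
  other cut vectors \<open>v(X \<triangle> A)\<close> and \<open>v(X \<triangle> B)\<close>, where \<open>\<delta>(B) = \<delta>(S) - \<delta>(A)\<close>; so no
  one-dimensional face contains both \<open>v(X)\<close> and \<open>v(Y)\<close>.
  Otherwise \<open>\<delta>(S)\<close> is a bond, so both of its shores are connected. A minimal subgraph
  containing \<open>\<delta>(S)\<close> whose two shores stay connected without the cut edges (a minimal
  cut frame) is biconnected, and it has cyclomatic number at least \<open>|\<delta>(S)| - 1\<close>.
  The biconnected component containing it has at least as large a cyclomatic number,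
  which is at most 2 in an almost tree (2); hence \<open>|\<delta>(S)| \<le> 3\<close>.\<close>

section \<open>Cuts\<close>

lemma simple_graph_obtain_ends:
  assumes "simple_graph ends"
  obtains u v where "ends e = {u, v}" "u \<noteq> v"
  using assms unfolding simple_graph_def by (metis card_2_iff)

lemma mem_delta_iff:
  assumes "ends e = {u, v}" "u \<noteq> v"
  shows "e \<in> delta ends S \<longleftrightarrow> (u \<in> S) \<noteq> (v \<in> S)"
  using assms by (cases "u \<in> S"; cases "v \<in> S") (auto simp: delta_def Int_insert_left)

lemma delta_obtain_crossing:
  assumes "simple_graph ends" and "e \<in> delta ends S"
  obtains a b where "ends e = {a, b}" "a \<in> S" "b \<notin> S"
proof -
  obtain a b where ab: "ends e = {a, b}" "a \<noteq> b"
    using simple_graph_obtain_ends[OF assms(1)] by blast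
  with assms(2) have "(a \<in> S) \<noteq> (b \<in> S)" by (simp add: mem_delta_iff)
  with ab that show ?thesis by (metis insert_commute)
qed

lemma not_mem_delta_same_side:
  assumes sg: "simple_graph ends" and "e \<notin> delta ends S" "ends e = {y, z}"
  shows "y \<in> S \<longleftrightarrow> z \<in> S"
proof -
  have "card (ends e) = 2"
    using sg unfolding simple_graph_def by blast
  with assms(3) have "y \<noteq> z"
    by auto
  with assms(2,3) show ?thesis by (simp add: mem_delta_iff)
qed

lemma delta_sym_diff:
  assumes "simple_graph ends"
  shows "delta ends (sym_diff A B) = sym_diff (delta ends A) (delta ends B)"
proof (rule set_eqI)
  fix e
  obtain u v where "ends e = {u, v}" "u \<noteq> v"
    using simple_graph_obtain_ends[OF assms] by blast
  then show "e \<in> delta ends (sym_diff A B) \<longleftrightarrow> e \<in> sym_diff (delta ends A) (delta ends B)"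
    by (simp add: mem_delta_iff) blast
qed

lemma delta_Compl:
  assumes "simple_graph ends"
  shows "delta ends (- S) = delta ends S"
proof (rule set_eqI)
  fix e
  obtain u v where "ends e = {u, v}" "u \<noteq> v"
    using simple_graph_obtain_ends[OF assms] by blast
  then show "e \<in> delta ends (- S) \<longleftrightarrow> e \<in> delta ends S" by (simp add: mem_delta_iff)
qed

lemma cutvec_eq_iff: "cutvec ends A = cutvec ends B \<longleftrightarrow> delta ends A = delta ends B"
  by (auto simp: cutvec_def vec_eq_iff)

lemma cutvec_nth_zero_one: "cutvec ends S $ e \<in> {0, 1}"
  by (simp add: cutvec_def)

section \<open>Adjacent vertices of the cut polytope\<close>

lemma affine_hull_2_zero_one:
  fixes p q r :: "real ^ 'n"
  assumes "\<And>i. p $ i \<in> {0, 1}" "\<And>i. q $ i \<in> {0, 1}" "\<And>i. r $ i \<in> {0, 1}"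
    and "p \<noteq> q" and "r \<in> affine hull {p, q}"
  shows "r = p \<or> r = q"
proof -
  obtain u where u: "r = p + u *\<^sub>R (q - p)"
    using assms(5) by (auto simp: affine_hull_2_alt)
  obtain i where i: "p $ i \<noteq> q $ i"
    using assms(4) by (auto simp: vec_eq_iff)
  have "r $ i = p $ i + u * (q $ i - p $ i)"
    using u by simp
  with i assms(1-3)[of i] have "u = 0 \<or> u = 1"
    by auto
  with u show ?thesis by auto
qed

lemma face_of_aff_dim_1_midpoint:
  fixes P :: "'a::euclidean_space set"
  assumes F: "F face_of P" "aff_dim F = 1"
    and pq: "p \<in> F" "q \<in> F" "p \<noteq> q"
    and rs: "r \<in> P" "s \<in> P" "r \<noteq> s" "midpoint r s = midpoint p q"
  shows "r \<in> affine hull {p, q}"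
proof -
  have "midpoint p q \<in> F"
    using face_of_imp_convex[OF F(1)] pq(1,2)
    by (meson convex_contains_segment midpoint_in_closed_segment subsetD)
  moreover have "midpoint r s \<in> open_segment r s"
    using rs(3) by (simp add: midpoint_in_open_segment)
  ultimately have "r \<in> F"
    using F(1) rs unfolding face_of_def by metis
  moreover have "collinear F"
    using F(2) by (simp add: collinear_aff_dim)
  ultimately have "collinear {p, q, r}"
    using pq by (auto intro: collinear_subset)
  with pq(3) show ?thesis
    by (simp add: collinear_3_affine_hull)
qed

lemma midpoint_cutvec_sym_diff:
  assumes sg: "simple_graph ends"
    and AB: "delta ends A \<inter> delta ends B = {}" "delta ends A \<union> delta ends B = delta ends (sym_diff X Y)"
  shows "midpoint (cutvec ends (sym_diff X A)) (cutvec ends (sym_diff X B))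
       = midpoint (cutvec ends X) (cutvec ends Y)"
  using AB unfolding midpoint_def
  by (auto simp: vec_eq_iff cutvec_def delta_sym_diff[OF sg])

lemma cutvec_not_adjacent_if_proper_subcut:
  assumes sg: "simple_graph ends"
    and ne: "cutvec ends X \<noteq> cutvec ends Y"
    and A: "delta ends A \<noteq> {}" "delta ends A \<subset> delta ends (sym_diff X Y)"
  shows "\<not> adjacent_in (CUT ends) (cutvec ends X) (cutvec ends Y)"
proof
  assume "adjacent_in (CUT ends) (cutvec ends X) (cutvec ends Y)"
  then obtain F where F: "F face_of CUT ends" "aff_dim F = 1"
      "cutvec ends X \<in> F" "cutvec ends Y \<in> F"
    unfolding adjacent_in_def by blast
  define B where "B = sym_diff (sym_diff X Y) A"
  have dB: "delta ends B = delta ends (sym_diff X Y) - delta ends A"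
    using A(2) unfolding B_def delta_sym_diff[OF sg] by blast
  have dXA: "delta ends (sym_diff X A) = sym_diff (delta ends X) (delta ends A)"
    by (rule delta_sym_diff[OF sg])
  have mid: "midpoint (cutvec ends (sym_diff X A)) (cutvec ends (sym_diff X B))
           = midpoint (cutvec ends X) (cutvec ends Y)"
    using A(2) by (intro midpoint_cutvec_sym_diff[OF sg]) (auto simp: dB)
  have "cutvec ends (sym_diff X A) \<noteq> cutvec ends (sym_diff X B)"
    unfolding cutvec_eq_iff dXA delta_sym_diff[OF sg] dB using A by blast
  then have "cutvec ends (sym_diff X A) \<in> affine hull {cutvec ends X, cutvec ends Y}"
    using F ne mid by (intro face_of_aff_dim_1_midpoint[where F = F]) (auto simp: CUT_def hull_inc)
  then have "cutvec ends (sym_diff X A) = cutvec ends X \<or> cutvec ends (sym_diff X A) = cutvec ends Y"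
    by (rule affine_hull_2_zero_one[OF cutvec_nth_zero_one cutvec_nth_zero_one cutvec_nth_zero_one ne])
  then show False
    using A unfolding cutvec_eq_iff dXA delta_sym_diff[OF sg] by blast
qed

section \<open>Reachability and edge counts\<close>

lemma adj_commute: "adj ends F u v \<longleftrightarrow> adj ends F v u"
  unfolding adj_def by (metis insert_commute)

lemma adj_rtranclp_sym:
  assumes "(adj ends F)\<^sup>*\<^sup>* u v"
  shows "(adj ends F)\<^sup>*\<^sup>* v u"
proof -
  have "symp (adj ends F)"
    by (rule sympI) (simp add: adj_commute)
  with assms show ?thesis
    by (metis symp_rtranclp sympD)
qed

lemma adj_rtranclp_mono:
  assumes "F \<subseteq> F'" and "(adj ends F)\<^sup>*\<^sup>* u v"
  shows "(adj ends F')\<^sup>*\<^sup>* u v"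
  using assms(2) by (rule mono_rtranclp[rule_format, rotated]) (use assms(1) in \<open>auto simp: adj_def\<close>)

lemma connected_sg_mono:
  "F \<subseteq> F' \<Longrightarrow> connected_sg ends W F \<Longrightarrow> connected_sg ends W F'"
  unfolding connected_sg_def by (meson adj_rtranclp_mono)

lemma connected_sgI_root:
  assumes "\<And>w. w \<in> W \<Longrightarrow> (adj ends F)\<^sup>*\<^sup>* r w"
  shows "connected_sg ends W F"
  unfolding connected_sg_def using assms by (meson adj_rtranclp_sym rtranclp_trans)

lemma adj_rtranclp_stays_on_shore:
  assumes sg: "simple_graph ends" and "(adj ends (F - delta ends S))\<^sup>*\<^sup>* x y" "x \<in> S"
  shows "y \<in> S \<and> (adj ends {e \<in> F - delta ends S. ends e \<subseteq> S})\<^sup>*\<^sup>* x y"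
  using assms(2)
proof (induction rule: rtranclp_induct)
  case base
  then show ?case using assms(3) by simp
next
  case (step y z)
  then obtain e where e: "e \<in> F" "e \<notin> delta ends S" "ends e = {y, z}"
    unfolding adj_def by auto
  with step.IH have "z \<in> S"
    using not_mem_delta_same_side[OF sg] by blast
  with e step.IH have "adj ends {e \<in> F - delta ends S. ends e \<subseteq> S} y z"
    unfolding adj_def by auto
  with step.IH \<open>z \<in> S\<close> show ?case
    by (meson rtranclp.rtrancl_into_rtrancl)
qed

lemma connected_delta_empty_imp_UNIV:
  assumes sg: "simple_graph ends" and conn: "connected_sg ends UNIV UNIV"
    and "delta ends A = {}" "x \<in> A"
  shows "A = UNIV"
proof -
  have "(adj ends (UNIV - delta ends A))\<^sup>*\<^sup>* x y" for y
    using conn assms(3) unfolding connected_sg_def by simp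
  then show ?thesis
    using adj_rtranclp_stays_on_shore[OF sg _ assms(4)] by blast
qed

lemma exists_parent_edges:
  assumes reach: "\<forall>w\<in>W. \<exists>x\<in>W0. (adj ends F)\<^sup>*\<^sup>* x w"
  shows "\<exists>pe (d :: 'v \<Rightarrow> nat). \<forall>w\<in>W - W0. pe w \<in> F \<and> (\<exists>y. ends (pe w) = {y, w} \<and> d y < d w)"
proof -
  define d where "d w = (LEAST n. \<exists>x\<in>W0. (adj ends F ^^ n) x w)" for w
  have dist: "\<exists>x\<in>W0. (adj ends F ^^ d w) x w" if "w \<in> W" for w
  proof -
    from reach that have "\<exists>n. \<exists>x\<in>W0. (adj ends F ^^ n) x w"
      by (metis rtranclp_power)
    then show ?thesis
      unfolding d_def by (rule LeastI_ex)
  qed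
  have "\<exists>e. e \<in> F \<and> (\<exists>y. ends e = {y, w} \<and> d y < d w)" if w: "w \<in> W - W0" for w
  proof -
    obtain x where x: "x \<in> W0" "(adj ends F ^^ d w) x w"
      using dist w by blast
    with w have "d w \<noteq> 0"
      by (metis DiffD2 relpowp_0_E)
    then obtain n where n: "d w = Suc n"
      using not0_implies_Suc by blast
    with x(2) obtain y where y: "(adj ends F ^^ n) x y" "adj ends F y w"
      by (metis relpowp_Suc_E)
    have "d y \<le> n"
      unfolding d_def using x(1) y(1) by (metis (mono_tags, lifting) Least_le)
    with y(2) n show ?thesis
      unfolding adj_def by (metis le_imp_less_Suc)
  qed
  then have "\<exists>pe. \<forall>w\<in>W - W0. pe w \<in> F \<and> (\<exists>y. ends (pe w) = {y, w} \<and> d y < d w)"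
    by (rule bchoice[OF ballI])
  then show ?thesis
    by blast
qed

lemma rooted_spanning_forest:
  fixes ends :: "'e \<Rightarrow> 'v::finite set"
  assumes sub: "is_subgraph ends W F"
    and reach: "\<forall>w\<in>W. \<exists>x\<in>W0. (adj ends F)\<^sup>*\<^sup>* x w"
  shows "\<exists>P\<subseteq>F. card P = card (W - W0) \<and> (\<forall>e\<in>P. \<not> ends e \<subseteq> W0)
    \<and> (\<forall>w\<in>W. \<exists>x\<in>W0. (adj ends P)\<^sup>*\<^sup>* x w)"
proof -
  obtain pe and d :: "'v \<Rightarrow> nat"
    where pe: "\<And>w. w \<in> W - W0 \<Longrightarrow> pe w \<in> F \<and> (\<exists>y. ends (pe w) = {y, w} \<and> d y < d w)"
    using exists_parent_edges[OF reach] by blast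
  have "inj_on pe (W - W0)"
  proof (rule inj_onI)
    fix w1 w2
    assume w: "w1 \<in> W - W0" "w2 \<in> W - W0" "pe w1 = pe w2"
    obtain y1 where y1: "ends (pe w1) = {y1, w1}" "d y1 < d w1" using pe[OF w(1)] by blast
    obtain y2 where y2: "ends (pe w2) = {y2, w2}" "d y2 < d w2" using pe[OF w(2)] by blast
    show "w1 = w2"
    proof (rule ccontr)
      assume "w1 \<noteq> w2"
      with y1(1) y2(1) w(3) have "w1 = y2 \<and> w2 = y1"
        by (metis doubleton_eq_iff)
      with y1(2) y2(2) show False by simp
    qed
  qed
  define P where "P = pe ` (W - W0)"
  have reach_P: "\<exists>x\<in>W0. (adj ends P)\<^sup>*\<^sup>* x w" if "w \<in> W" for w
    using that
  proof (induction "d w" arbitrary: w rule: less_induct)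
    case less
    show ?case
    proof (cases "w \<in> W0")
      case True
      then show ?thesis by blast
    next
      case False
      with less.prems have w: "w \<in> W - W0" by blast
      then obtain y where y: "ends (pe w) = {y, w}" "d y < d w"
        using pe by blast
      have "y \<in> W"
        using sub pe[OF w] y(1) unfolding is_subgraph_def by blast
      with less.hyps y(2) obtain x where "x \<in> W0" "(adj ends P)\<^sup>*\<^sup>* x y"
        by blast
      moreover have "adj ends P y w"
        unfolding adj_def P_def using w y(1) by blast
      ultimately show ?thesis
        by (meson rtranclp.rtrancl_into_rtrancl)
    qed
  qed
  have "P \<subseteq> F"
    unfolding P_def using pe by blast
  moreover have "\<not> ends e \<subseteq> W0" if "e \<in> P" for e
  proof -
    from that obtain w where "w \<in> W - W0" "e = pe w"
      unfolding P_def by blast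
    with pe show ?thesis
      by blast
  qed
  moreover have "card P = card (W - W0)"
    unfolding P_def using \<open>inj_on pe (W - W0)\<close> by (simp add: card_image)
  ultimately show ?thesis
    using reach_P by blast
qed

lemma connected_card_le:
  fixes ends :: "'e::finite \<Rightarrow> 'v::finite set"
  assumes "is_subgraph ends W F" "connected_sg ends W F" "W \<noteq> {}"
  shows "card W \<le> card F + 1"
proof -
  obtain r where r: "r \<in> W" using assms(3) by blast
  obtain P where "P \<subseteq> F" "card P = card (W - {r})"
    using rooted_spanning_forest[OF assms(1), of "{r}"] r assms(2)
    unfolding connected_sg_def by blast
  then have "card (W - {r}) \<le> card F"
    by (metis card_mono finite)
  with r show ?thesis
    by simp
qed

lemma spanning_tree_card_le:
  fixes ends :: "'e::finite \<Rightarrow> 'v::finite set"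
  assumes "is_subgraph ends W F" "spanning_tree ends W F T" "W \<noteq> {}"
  shows "card T + 1 \<le> card W"
proof -
  obtain r where r: "r \<in> W" using assms(3) by blast
  have T: "T \<subseteq> F" "connected_sg ends W T" "\<forall>t\<in>T. \<not> connected_sg ends W (T - {t})"
    using assms(2) unfolding spanning_tree_def by auto
  then have "is_subgraph ends W T"
    using assms(1) unfolding is_subgraph_def by blast
  then obtain P where P: "P \<subseteq> T" "card P = card (W - {r})" "\<forall>w\<in>W. (adj ends P)\<^sup>*\<^sup>* r w"
    using rooted_spanning_forest[of ends W T "{r}"] r T(2) unfolding connected_sg_def by blast
  have "connected_sg ends W P"
    using P(3) by (blast intro: connected_sgI_root)
  \<comment> \<open>by minimality of \<open>T\<close>, the spanning forest \<open>P \<subseteq> T\<close> is all of \<open>T\<close>\<close>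
  then have "T \<subseteq> P"
    using P(1) T(3) connected_sg_mono[of P] by blast
  then have "card T \<le> card (W - {r})"
    using P(2) by (metis card_mono finite)
  moreover have "card W > 0" "card (W - {r}) = card W - 1"
    using r by (auto simp: card_gt_0_iff)
  ultimately show ?thesis
    by linarith
qed

lemma cyclomatic_number_mono:
  fixes ends :: "'e::finite \<Rightarrow> 'v::finite set"
  assumes "is_subgraph ends W F" "connected_sg ends W F" "is_subgraph ends W0 F0"
    "W0 \<subseteq> W" "F0 \<subseteq> F" "W0 \<noteq> {}"
  shows "card F0 + card W \<le> card F + card W0"
proof -
  obtain r where r: "r \<in> W0" using assms(6) by blast
  then have "\<forall>w\<in>W. \<exists>x\<in>W0. (adj ends F)\<^sup>*\<^sup>* x w"
    using assms(2,4) unfolding connected_sg_def by blast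
  then obtain P where P: "P \<subseteq> F" "card P = card (W - W0)" "\<forall>e\<in>P. \<not> ends e \<subseteq> W0"
    using rooted_spanning_forest[OF assms(1)] by blast
  have "P \<inter> F0 = {}"
    using P(3) assms(3) unfolding is_subgraph_def by blast
  then have "card (F0 \<union> P) = card F0 + card P"
    by (simp add: card_Un_disjoint Int_commute)
  moreover have "card (F0 \<union> P) \<le> card F"
    using P(1) assms(5) by (simp add: card_mono)
  moreover have "card W = card W0 + card (W - W0)"
    using assms(4) by (metis card_Diff_subset card_mono finite le_add_diff_inverse)
  ultimately show ?thesis
    using P(2) by linarith
qed

section \<open>Bonds\<close>

lemma shore_connected_if_no_proper_subcut:
  assumes sg: "simple_graph ends" and conn: "connected_sg ends UNIV UNIV"
    and dS: "delta ends S \<noteq> {}"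
    and bond: "\<nexists>A. delta ends A \<noteq> {} \<and> delta ends A \<subset> delta ends S"
  shows "connected_sg ends S (UNIV - delta ends S)"
proof -
  obtain e0 where e0: "e0 \<in> delta ends S"
    using dS by blast
  then obtain a b where ab: "ends e0 = {a, b}" "a \<in> S" "b \<notin> S"
    using delta_obtain_crossing[OF sg] by blast
  have "(adj ends (UNIV - delta ends S))\<^sup>*\<^sup>* u a" if u: "u \<in> S" for u
  proof -
    define A where "A = {v. (adj ends (UNIV - delta ends S))\<^sup>*\<^sup>* u v}"
    have "delta ends A \<subseteq> delta ends S"
    proof
      fix e
      assume "e \<in> delta ends A"
      then obtain y z where yz: "ends e = {y, z}" "y \<in> A" "z \<notin> A"
        using delta_obtain_crossing[OF sg] by blast
      show "e \<in> delta ends S"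
      proof (rule ccontr)
        assume "e \<notin> delta ends S"
        with yz(1) have "adj ends (UNIV - delta ends S) y z"
          unfolding adj_def by blast
        with yz(2) have "z \<in> A"
          unfolding A_def by (simp add: rtranclp.rtrancl_into_rtrancl)
        with yz(3) show False ..
      qed
    qed
    moreover have "A \<subseteq> S"
      unfolding A_def using adj_rtranclp_stays_on_shore[OF sg _ u] by blast
    moreover have "u \<in> A"
      unfolding A_def by simp
    ultimately have "delta ends A = delta ends S"
      using bond connected_delta_empty_imp_UNIV[OF sg conn] ab(3) by blast
    with e0 obtain p q where pq: "ends e0 = {p, q}" "p \<in> A" "q \<notin> A"
      using delta_obtain_crossing[OF sg] by blast
    with ab \<open>A \<subseteq> S\<close> have "a \<in> A"
      by (metis doubleton_eq_iff subsetD)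
    then show ?thesis
      unfolding A_def by simp
  qed
  then show ?thesis
    by (blast intro: connected_sgI_root adj_rtranclp_sym)
qed

section \<open>Cut frames\<close>

text \<open>Minimal cut frames are biconnected; this is how a bond is placed inside a biconnected
  component.\<close>

definition cut_frame :: "('e \<Rightarrow> 'v set) \<Rightarrow> 'v set \<Rightarrow> 'v set \<Rightarrow> 'e set \<Rightarrow> bool" where
  "cut_frame ends S W F \<longleftrightarrow> is_subgraph ends W F \<and> delta ends S \<subseteq> F \<and>
     connected_sg ends (W \<inter> S) (F - delta ends S) \<and> connected_sg ends (W - S) (F - delta ends S)"

lemma cut_frame_Compl:
  "simple_graph ends \<Longrightarrow> cut_frame ends (- S) W F \<longleftrightarrow> cut_frame ends S W F"
  unfolding cut_frame_def delta_Compl by (auto simp: Diff_eq Int_commute)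

lemma cut_frame_shore_connected:
  assumes sg: "simple_graph ends" and P: "cut_frame ends S W F"
  shows "connected_sg ends (W \<inter> S) {e \<in> F - delta ends S. ends e \<subseteq> S}"
  unfolding connected_sg_def
proof (intro ballI)
  fix x y
  assume xy: "x \<in> W \<inter> S" "y \<in> W \<inter> S"
  with P have "(adj ends (F - delta ends S))\<^sup>*\<^sup>* x y"
    unfolding cut_frame_def connected_sg_def by blast
  with xy show "(adj ends {e \<in> F - delta ends S. ends e \<subseteq> S})\<^sup>*\<^sup>* x y"
    using adj_rtranclp_stays_on_shore[OF sg] by blast
qed

lemma cut_frame_outer_shore_connected:
  assumes sg: "simple_graph ends" and P: "cut_frame ends S W F"
  shows "connected_sg ends (W - S) {e \<in> F - delta ends S. ends e \<subseteq> - S}"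
  using cut_frame_shore_connected[OF sg cut_frame_Compl[OF sg, THEN iffD2, OF P]]
  by (simp add: delta_Compl[OF sg] Diff_eq)

lemma cut_frame_connected:
  assumes sg: "simple_graph ends" and P: "cut_frame ends S W F" and dS: "delta ends S \<noteq> {}"
  shows "connected_sg ends W F"
proof -
  obtain e0 where e0: "e0 \<in> delta ends S"
    using dS by blast
  then obtain a b where ab: "ends e0 = {a, b}" "a \<in> S" "b \<notin> S"
    using delta_obtain_crossing[OF sg] by blast
  have e0F: "e0 \<in> F"
    using P e0 unfolding cut_frame_def by blast
  then have abW: "a \<in> W" "b \<in> W"
    using P ab unfolding cut_frame_def is_subgraph_def by auto
  have "(adj ends F)\<^sup>*\<^sup>* a x" if x: "x \<in> W" for x
  proof (cases "x \<in> S")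
    case True
    with P x abW ab show ?thesis
      unfolding cut_frame_def connected_sg_def by (meson Diff_subset IntI adj_rtranclp_mono)
  next
    case False
    with P x abW ab have "(adj ends F)\<^sup>*\<^sup>* b x"
      unfolding cut_frame_def connected_sg_def by (meson Diff_iff Diff_subset adj_rtranclp_mono)
    moreover have "adj ends F a b"
      unfolding adj_def using e0F ab(1) by blast
    ultimately show ?thesis
      by (meson converse_rtranclp_into_rtranclp)
  qed
  then show ?thesis
    by (rule connected_sgI_root)
qed

text \<open>Each shore contributes a connected graph, so at least \<open>|W| - 2\<close> edges besides the
  cut edges.\<close>

lemma cut_frame_card:
  fixes ends :: "'e::finite \<Rightarrow> 'v::finite set"
  assumes sg: "simple_graph ends" and P: "cut_frame ends S W F" and dS: "delta ends S \<noteq> {}"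
  shows "card W + card (delta ends S) \<le> card F + 2"
proof -
  obtain e0 where e0: "e0 \<in> delta ends S"
    using dS by blast
  then obtain a b where ab: "ends e0 = {a, b}" "a \<in> S" "b \<notin> S"
    using delta_obtain_crossing[OF sg] by blast
  have "a \<in> W" "b \<in> W"
    using P e0 ab unfolding cut_frame_def is_subgraph_def by auto
  with ab have ne: "W \<inter> S \<noteq> {}" "W - S \<noteq> {}"
    by blast+
  define FS where "FS = {e \<in> F - delta ends S. ends e \<subseteq> S}"
  define FO where "FO = {e \<in> F - delta ends S. ends e \<subseteq> - S}"
  have sub: "is_subgraph ends W F"
    using P unfolding cut_frame_def by blast
  have "card (W \<inter> S) \<le> card FS + 1"
  proof (rule connected_card_le)
    show "is_subgraph ends (W \<inter> S) FS"
      using sub unfolding FS_def is_subgraph_def by blast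
    show "connected_sg ends (W \<inter> S) FS"
      unfolding FS_def by (rule cut_frame_shore_connected[OF sg P])
  qed (rule ne(1))
  moreover have "card (W - S) \<le> card FO + 1"
  proof (rule connected_card_le)
    show "is_subgraph ends (W - S) FO"
      using sub unfolding FO_def is_subgraph_def by blast
    show "connected_sg ends (W - S) FO"
      unfolding FO_def by (rule cut_frame_outer_shore_connected[OF sg P])
  qed (rule ne(2))
  moreover have "ends e \<noteq> {}" for e
    using sg unfolding simple_graph_def by (metis card.empty zero_neq_numeral)
  then have "FS \<inter> FO = {}" "(FS \<union> FO) \<inter> delta ends S = {}"
    unfolding FS_def FO_def by blast+
  then have "card (FS \<union> FO \<union> delta ends S) = card FS + card FO + card (delta ends S)"
    by (simp add: card_Un_disjoint)
  moreover have "card (FS \<union> FO \<union> delta ends S) \<le> card F"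
    using P unfolding cut_frame_def FS_def FO_def by (simp add: card_mono)
  moreover have "card W = card (W \<inter> S) + card (W - S)"
    by (rule card_Int_Diff) simp
  ultimately show ?thesis
    by linarith
qed

lemma adj_rtranclp_avoiding:
  assumes clos: "\<And>e y z. y \<in> C \<Longrightarrow> e \<in> F \<Longrightarrow> ends e = {y, z} \<Longrightarrow> z \<notin> C \<Longrightarrow> z = w"
    and "(adj ends F)\<^sup>*\<^sup>* x y" "x \<notin> C"
  shows "(adj ends {e \<in> F. ends e \<inter> C = {}})\<^sup>*\<^sup>* x (if y \<in> C then w else y)"
  using assms(2)
proof (induction rule: rtranclp_induct)
  case base
  then show ?case using assms(3) by simp
next
  case (step y z)
  then obtain e where e: "e \<in> F" "ends e = {y, z}" "ends e = {z, y}"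
    unfolding adj_def by (auto simp: insert_commute)
  consider "y \<in> C" "z \<in> C" | "y \<in> C" "z \<notin> C" | "y \<notin> C" "z \<in> C" | "y \<notin> C" "z \<notin> C"
    by blast
  then show ?case
  proof cases
    case 2
    with clos[OF _ e(1,2)] step.IH show ?thesis
      by simp
  next
    case 3
    with clos[OF _ e(1,3)] step.IH show ?thesis
      by simp
  next
    case 4
    with e have "adj ends {e \<in> F. ends e \<inter> C = {}} y z"
      unfolding adj_def by auto
    with 4 step.IH show ?thesis
      by (simp add: rtranclp.rtrancl_into_rtrancl)
  qed (use step.IH in simp)
qed

text \<open>If deleting \<open>w\<close> from a cut frame disconnects it, some component of the rest misses
  the outer shore, and deleting it leaves a smaller cut frame.\<close>

lemma exists_removable_component:
  assumes sg: "simple_graph ends" and P: "cut_frame ends S W F" and w: "w \<in> W" "w \<in> S"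
    and nc: "\<not> connected_sg ends (W - {w}) {e \<in> F. w \<notin> ends e}"
  shows "\<exists>C. C \<noteq> {} \<and> C \<subseteq> W \<inter> S - {w} \<and>
    (\<forall>e y z. y \<in> C \<longrightarrow> e \<in> F \<longrightarrow> ends e = {y, z} \<longrightarrow> z \<noteq> w \<longrightarrow> z \<in> C)"
proof -
  define F1 where "F1 = {e \<in> F. w \<notin> ends e}"
  have outer: "(adj ends F1)\<^sup>*\<^sup>* x y" if "x \<in> W - S" "y \<in> W - S" for x y
  proof -
    have "{e \<in> F - delta ends S. ends e \<subseteq> - S} \<subseteq> F1"
      unfolding F1_def using w(2) by blast
    with that show ?thesis
      using cut_frame_outer_shore_connected[OF sg P] unfolding connected_sg_def
      by (meson adj_rtranclp_mono)
  qed
  have "\<exists>u\<in>W - {w}. \<forall>z\<in>W - S. \<not> (adj ends F1)\<^sup>*\<^sup>* u z"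
  proof (rule ccontr)
    assume "\<not> ?thesis"
    then have to_outer: "\<exists>z\<in>W - S. (adj ends F1)\<^sup>*\<^sup>* u z" if "u \<in> W - {w}" for u
      using that by blast
    have "(adj ends F1)\<^sup>*\<^sup>* x y" if xy: "x \<in> W - {w}" "y \<in> W - {w}" for x y
    proof -
      obtain z1 z2 where "z1 \<in> W - S" "(adj ends F1)\<^sup>*\<^sup>* x z1" "z2 \<in> W - S" "(adj ends F1)\<^sup>*\<^sup>* y z2"
        using to_outer xy by meson
      then show ?thesis
        using outer adj_rtranclp_sym rtranclp_trans by metis
    qed
    with nc show False
      unfolding F1_def connected_sg_def by blast
  qed
  then obtain u where u: "u \<in> W - {w}" "\<forall>z\<in>W - S. \<not> (adj ends F1)\<^sup>*\<^sup>* u z"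
    by blast
  define C where "C = {y. (adj ends F1)\<^sup>*\<^sup>* u y}"
  have CW: "y \<in> W - {w}" if "(adj ends F1)\<^sup>*\<^sup>* u y" for y
    using that
  proof (induction rule: rtranclp_induct)
    case base
    then show ?case using u by blast
  next
    case (step y z)
    then obtain e where "e \<in> F1" "ends e = {y, z}"
      unfolding adj_def by blast
    with P show ?case
      unfolding F1_def cut_frame_def is_subgraph_def by blast
  qed
  have "C \<noteq> {}"
    unfolding C_def by blast
  moreover have "C \<subseteq> W \<inter> S - {w}"
    using CW u(2) unfolding C_def by blast
  moreover have "z \<in> C" if "y \<in> C" "e \<in> F" "ends e = {y, z}" "z \<noteq> w" for e y z
  proof -
    have "y \<noteq> w"
      using CW that(1) unfolding C_def by blast
    with that have "adj ends F1 y z"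
      unfolding F1_def adj_def by auto
    with that(1) show ?thesis
      unfolding C_def by (simp add: rtranclp.rtrancl_into_rtrancl)
  qed
  ultimately show ?thesis
    by (intro exI[of _ C] conjI allI impI) auto
qed

lemma cut_frame_remove_component:
  assumes sg: "simple_graph ends" and P: "cut_frame ends S W F" and w: "w \<in> W" "w \<in> S"
    and C: "C \<subseteq> W \<inter> S - {w}"
    and clos: "\<And>e y z. y \<in> C \<Longrightarrow> e \<in> F \<Longrightarrow> ends e = {y, z} \<Longrightarrow> z \<noteq> w \<Longrightarrow> z \<in> C"
  shows "cut_frame ends S (W - C) {e \<in> F. ends e \<inter> C = {}}"
proof -
  define F' where "F' = {e \<in> F. ends e \<inter> C = {}}"
  have "is_subgraph ends (W - C) F'"
    using P unfolding F'_def cut_frame_def is_subgraph_def by blast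
  moreover have "delta ends S \<subseteq> F'"
  proof
    fix e
    assume e: "e \<in> delta ends S"
    then have "e \<in> F"
      using P unfolding cut_frame_def by blast
    moreover obtain p q where pq: "ends e = {p, q}" "p \<in> S" "q \<notin> S"
      using delta_obtain_crossing[OF sg e] by blast
    moreover have "p \<notin> C"
      using clos[OF _ \<open>e \<in> F\<close> pq(1)] pq(3) w(2) C by blast
    ultimately show "e \<in> F'"
      unfolding F'_def using C by auto
  qed
  moreover have "connected_sg ends ((W - C) \<inter> S) (F' - delta ends S)"
    unfolding connected_sg_def
  proof (intro ballI)
    fix x y
    assume xy: "x \<in> (W - C) \<inter> S" "y \<in> (W - C) \<inter> S"
    with P have "(adj ends (F - delta ends S))\<^sup>*\<^sup>* x y"
      unfolding cut_frame_def connected_sg_def by blast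
    moreover have "{e \<in> F - delta ends S. ends e \<inter> C = {}} = F' - delta ends S"
      unfolding F'_def by blast
    moreover have "z = w" if "y \<in> C" "e \<in> F - delta ends S" "ends e = {y, z}" "z \<notin> C" for e y z
      using clos that by blast
    ultimately show "(adj ends (F' - delta ends S))\<^sup>*\<^sup>* x y"
      using adj_rtranclp_avoiding[of C "F - delta ends S" ends w x y] xy by auto
  qed
  moreover have "connected_sg ends ((W - C) - S) (F' - delta ends S)"
  proof -
    have "{e \<in> F - delta ends S. ends e \<subseteq> - S} \<subseteq> F' - delta ends S"
      unfolding F'_def using C by blast
    moreover have "(W - C) - S = W - S"
      using C by blast
    ultimately show ?thesis
      using cut_frame_outer_shore_connected[OF sg P] connected_sg_mono by metis
  qed
  ultimately show ?thesis
    unfolding cut_frame_def F'_def by blast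
qed

lemma cut_frame_minimal_biconn:
  fixes ends :: "'e::finite \<Rightarrow> 'v::finite set"
  assumes sg: "simple_graph ends" and P: "cut_frame ends S W F" and dS: "delta ends S \<noteq> {}"
    and min: "\<And>W' F'. cut_frame ends S W' F' \<Longrightarrow> card W + card F \<le> card W' + card F'"
  shows "biconn ends W F"
  unfolding biconn_def
proof (intro conjI ballI)
  show "connected_sg ends W F"
    by (rule cut_frame_connected[OF sg P dS])
next
  fix w
  assume w: "w \<in> W"
  show "connected_sg ends (W - {w}) {e \<in> F. w \<notin> ends e}"
  proof (rule ccontr)
    assume nc: "\<not> ?thesis"
    have "\<exists>T. cut_frame ends T W F \<and> w \<in> T \<and> (T = S \<or> T = - S)"
      using P cut_frame_Compl[OF sg, of S] by (cases "w \<in> S") auto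
    then obtain T where T: "cut_frame ends T W F" "w \<in> T" "T = S \<or> T = - S"
      by blast
    obtain C where C: "C \<noteq> {}" "C \<subseteq> W \<inter> T - {w}"
      "\<And>e y z. y \<in> C \<Longrightarrow> e \<in> F \<Longrightarrow> ends e = {y, z} \<Longrightarrow> z \<noteq> w \<Longrightarrow> z \<in> C"
      using exists_removable_component[OF sg T(1) w T(2) nc] by blast
    have "cut_frame ends T (W - C) {e \<in> F. ends e \<inter> C = {}}"
      by (rule cut_frame_remove_component[OF sg T(1) w T(2) C(2,3)])
    then have "cut_frame ends S (W - C) {e \<in> F. ends e \<inter> C = {}}"
      using T(3) cut_frame_Compl[OF sg] by blast
    then have "card W + card F \<le> card (W - C) + card {e \<in> F. ends e \<inter> C = {}}"
      by (rule min)
    moreover have "W - C \<subset> W"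
      using C(1,2) by blast
    then have "card (W - C) < card W"
      by (simp add: psubset_card_mono)
    moreover have "card {e \<in> F. ends e \<inter> C = {}} \<le> card F"
      by (simp add: card_mono)
    ultimately show False
      by linarith
  qed
qed

section \<open>The cyclomatic bound\<close>

lemma biconn_extends_to_biconnected_component:
  fixes ends :: "'e::finite \<Rightarrow> 'v::finite set"
  assumes "is_subgraph ends W0 F0" "biconn ends W0 F0"
  shows "\<exists>W F. biconnected_component ends W F \<and> W0 \<subseteq> W \<and> F0 \<subseteq> F"
proof -
  define Q where "Q = (\<lambda>(W, F). is_subgraph ends W F \<and> biconn ends W F \<and> W0 \<subseteq> W \<and> F0 \<subseteq> F)"
  define size :: "'v set \<times> 'e set \<Rightarrow> nat" where "size = (\<lambda>(W, F). card W + card F)"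
  have "\<forall>WF. Q WF \<longrightarrow> size WF < card (UNIV :: 'v set) + card (UNIV :: 'e set) + 1"
    unfolding size_def by (auto simp: add_mono card_mono le_imp_less_Suc)
  moreover have "Q (W0, F0)"
    unfolding Q_def using assms by simp
  ultimately obtain WF where WF: "Q WF" and max: "\<And>WF'. Q WF' \<Longrightarrow> size WF' \<le> size WF"
    using ex_has_greatest_nat[of Q] by metis
  obtain W F where WF_eq: "WF = (W, F)"
    by fastforce
  have "W' = W \<and> F' = F"
    if W'F': "is_subgraph ends W' F'" "biconn ends W' F'" "W \<subseteq> W'" "F \<subseteq> F'" for W' F'
  proof -
    have "Q (W', F')"
      using WF W'F' unfolding WF_eq Q_def by auto
    then have "card W' + card F' \<le> card W + card F"
      using max unfolding WF_eq size_def by fastforce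
    moreover have "card W \<le> card W'" "card F \<le> card F'"
      using W'F'(3,4) by (simp_all add: card_mono)
    ultimately have "card W' = card W" "card F' = card F"
      by linarith+
    with W'F'(3,4) show ?thesis
      by (metis card_subset_eq finite)
  qed
  with WF show ?thesis
    unfolding WF_eq Q_def biconnected_component_def by blast
qed

lemma cut_frame_UNIV_if_no_proper_subcut:
  assumes sg: "simple_graph ends" and conn: "connected_sg ends UNIV UNIV"
    and dS: "delta ends S \<noteq> {}"
    and bond: "\<nexists>A. delta ends A \<noteq> {} \<and> delta ends A \<subset> delta ends S"
  shows "cut_frame ends S UNIV UNIV"
proof -
  have "connected_sg ends S (UNIV - delta ends S)"
    by (rule shore_connected_if_no_proper_subcut[OF sg conn dS bond])
  moreover have "connected_sg ends (- S) (UNIV - delta ends S)"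
    using shore_connected_if_no_proper_subcut[OF sg conn, of "- S"] dS bond
    unfolding delta_Compl[OF sg] by blast
  ultimately show ?thesis
    unfolding cut_frame_def is_subgraph_def by (simp add: Compl_eq_Diff_UNIV)
qed

lemma card_delta_le_3_if_no_proper_subcut:
  fixes ends :: "'e::finite \<Rightarrow> 'v::finite set"
  assumes sg: "simple_graph ends" and at: "almost_tree 2 ends"
    and bond: "\<nexists>A. delta ends A \<noteq> {} \<and> delta ends A \<subset> delta ends S"
  shows "card (delta ends S) \<le> 3"
proof (rule ccontr)
  assume "\<not> ?thesis"
  then have dS: "delta ends S \<noteq> {}"
    by auto
  have conn: "connected_sg ends UNIV UNIV"
    using at unfolding almost_tree_def by blast
  define size :: "'v set \<times> 'e set \<Rightarrow> nat" where "size = (\<lambda>(W, F). card W + card F)"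
  obtain WF0 where WF0: "case_prod (cut_frame ends S) WF0"
    and min: "\<And>WF. case_prod (cut_frame ends S) WF \<Longrightarrow> size WF0 \<le> size WF"
    using ex_has_least_nat[of "case_prod (cut_frame ends S)" "(UNIV, UNIV)" size]
      cut_frame_UNIV_if_no_proper_subcut[OF sg conn dS bond] by auto
  obtain W0 F0 where WF0_eq: "WF0 = (W0, F0)"
    by fastforce
  have P0: "cut_frame ends S W0 F0"
    using WF0 unfolding WF0_eq by simp
  have "biconn ends W0 F0"
    using cut_frame_minimal_biconn[OF sg P0 dS] min unfolding WF0_eq size_def by fastforce
  moreover have sub0: "is_subgraph ends W0 F0"
    using P0 unfolding cut_frame_def by blast
  ultimately obtain W F where WF: "biconnected_component ends W F" "W0 \<subseteq> W" "F0 \<subseteq> F"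
    using biconn_extends_to_biconnected_component by blast
  then obtain T where T: "spanning_tree ends W F T" "card (F - T) \<le> 2"
    using at unfolding almost_tree_def by blast
  obtain e0 where "e0 \<in> delta ends S"
    using dS by blast
  with P0 have "ends e0 \<subseteq> W0"
    unfolding cut_frame_def is_subgraph_def by blast
  moreover obtain u v where "ends e0 = {u, v}"
    using simple_graph_obtain_ends[OF sg] by blast
  ultimately have W0: "W0 \<noteq> {}"
    by blast
  have sub: "is_subgraph ends W F" and conn_W: "connected_sg ends W F"
    using WF(1) unfolding biconnected_component_def biconn_def by blast+
  have "card F0 + card W \<le> card F + card W0"
    by (rule cyclomatic_number_mono[OF sub conn_W sub0 WF(2,3) W0])
  moreover have "card T + 1 \<le> card W"
    using spanning_tree_card_le[OF sub T(1)] W0 WF(2) by blast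
  moreover have "card (F - T) = card F - card T"
    using T(1) unfolding spanning_tree_def by (simp add: card_Diff_subset)
  moreover have "card W0 + card (delta ends S) \<le> card F0 + 2"
    by (rule cut_frame_card[OF sg P0 dS])
  ultimately show False
    using T(2) \<open>\<not> card (delta ends S) \<le> 3\<close> by linarith
qed

theorem lemma2:
  fixes ends :: "'e::finite \<Rightarrow> 'v::finite set" and X Y :: "'v set"
  assumes "simple_graph ends"
    and "almost_tree 2 ends"
    and "cutvec ends X \<noteq> cutvec ends Y"
    and "cutvec ends X extreme_point_of CUT ends"
    and "cutvec ends Y extreme_point_of CUT ends"
    and "adjacent_in (CUT ends) (cutvec ends X) (cutvec ends Y)"
  shows "card (delta ends ((X - Y) \<union> (Y - X))) \<le> 3"
proof -
  \<comment> \<open>Adjacency alone forces the bound.\<close>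
  have "\<nexists>A. delta ends A \<noteq> {} \<and> delta ends A \<subset> delta ends (sym_diff X Y)"
    using cutvec_not_adjacent_if_proper_subcut[OF assms(1,3)] assms(6) by blast
  then show ?thesis
    by (rule card_delta_le_3_if_no_proper_subcut[OF assms(1,2)])
qed

end
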